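(* Let $\mathbf{a},\mathbf{b}\in\mathbb{R}^m$ satisfy $\mathcal{U}^{\mathbf{a},\mathbf{b}}\neq\emptyset$, let $\mathrm{h}^{\mathbf{a},\mathbf{b}}$ be an $\ell$-MRC for $\mathcal{U}^{\mathbf{a},\mathbf{b}}$, and let $\underline{R}^{\,\mathbf{a},\mathbf{b}}_{\ell}$ be the maximum value of the linear program $$\max_{\boldsymbol{\mu},\boldsymbol{\eta},\nu}\ \tfrac{1}{2}(\mathbf{b}+\mathbf{a})^{\mathrm{T}}\boldsymbol{\mu}-\tfrac{1}{2}(\mathbf{b}-\mathbf{a})^{\mathrm{T}}\boldsymbol{\eta}+\nu\ \text{ s.t. } \Phi(x,y)^{\mathrm{T}}\boldsymbol{\mu}+\nu\leq \ell(\mathrm{h}^{\mathbf{a},\mathbf{b}},(x,y))\ \forall x\in\mathcal{X},y\in\mathcal{Y},\ \boldsymbol{\eta}+\boldsymbol{\mu}\succeq\mathbf{0},\ \boldsymbol{\eta}-\boldsymbol{\mu}\succeq\mathbf{0}.$$ If $\mathrm{p}^*\in\mathcal{U}^{\mathbf{a},\mathbf{b}}$, then $$\underline{R}^{\,\mathbf{a},\mathbf{b}}_{\ell}\leq R_\ell(\mathrm{h}^{\mathbf{a},\mathbf{b}})\leq H_\ell(\mathcal{U}^{\mathbf{a},\mathbf{b}}).$$ In addition, $R_\ell(\mathrm{h}^{\mathbf{a},\mathbf{b}})=H_\ell(\mathcal{U}^{\mathbf{a},\mathbf{b}})$ if $\mathrm{p}^*$ maximizes the $\ell$-entropy over $\mathcal{U}^{\mathbf{a},\mathbf{b}}$,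 and $R_\ell(\mathrm{h}^{\mathbf{a},\mathbf{b}})=\underline{R}^{\,\mathbf{a},\mathbf{b}}_{\ell}$ if $\mathrm{p}^*$ minimizes the expected $\ell$-loss of $\mathrm{h}^{\mathbf{a},\mathbf{b}}$ over $\mathcal{U}^{\mathbf{a},\mathbf{b}}$.
   Context: Let $\mathcal{X},\mathcal{Y}$ be finite nonempty sets, $\mathcal{Y}=\{1,\dots,|\mathcal{Y}|\}$; $\Delta(\mathcal{Z})$ is the set of probability distributions on a finite set $\mathcal{Z}$. A classification rule $\mathrm{h}$ assigns to each $x$ a distribution $\mathrm{h}(\cdot|x)\in\Delta(\mathcal{Y})$; $\mathrm{T}(\mathcal{X},\mathcal{Y})$ is the set of such rules. A score function $L:\Delta(\mathcal{Y})\times\mathcal{Y}\to(-\infty,\infty]$ is lower semi-continuous and convex in its first argument; $\ell(\mathrm{h},(x,y))=L(\mathrm{h}(\cdot|x),y)$, $\ell(\mathrm{h},\mathrm{p})=\sum_{x,y}\mathrm{p}(x,y)\ell(\mathrm{h},(x,y))$. $H_\ell(\mathrm{p})=\min_{\mathrm{h}}\ell(\mathrm{h},\mathrm{p})$, $H_\ell(\mathcal{U})=\max_{\mathrm{p}\in\mathcal{U}}H_\ell(\mathrm{p})$; an $\ell$-MRC for convex compact $\mathcal{U}$ is a minimizer over $\mathrm{T}(\mathcal{X},\mathcal{Y})$ of $\max_{\mathrm{p}\in\mathcal{U}}\ell(\mathrm{h},\mathrm{p})$. $\mathrm{p}^*$ is the true underlying distribution and $R_\ell(\mathrm{h})=\ell(\mathrm{h},\mathrm{p}^*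 )$. $\Phi:\mathcal{X}\times\mathcal{Y}\to\mathbb{R}^m$ is a feature mapping, $\preceq,\succeq$ are componentwise, and $\mathcal{U}^{\mathbf{a},\mathbf{b}}=\{\mathrm{p}\in\Delta(\mathcal{X}\times\mathcal{Y}):\mathbf{a}\preceq\mathbb{E}_{\mathrm{p}}\{\Phi(x,y)\}\preceq\mathbf{b}\}$. *)

theory Defs
  imports "HOL-Analysis.Analysis"
begin

definition dist_simplex :: "('z::finite \<Rightarrow> real) set" where
  "dist_simplex = {p. (\<forall>z. 0 \<le> p z) \<and> (\<Sum>z\<in>UNIV. p z) = 1}"

definition rules :: "('x::finite \<Rightarrow> 'y::finite \<Rightarrow> real) set" where
  "rules = {h. \<forall>x. h x \<in> dist_simplex}"

definition score_function :: "(('y::finite \<Rightarrow> real) \<Rightarrow> 'y \<Rightarrow> ereal) \<Rightarrow> bool" where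
  "score_function L \<longleftrightarrow>
     (\<forall>q\<in>dist_simplex. \<forall>y. L q y \<noteq> -\<infinity>) \<and>
     (\<forall>y. \<forall>q\<in>dist_simplex. \<forall>c. c < L q y \<longrightarrow>
          eventually (\<lambda>r. c < L r y) (at q within dist_simplex)) \<and>
     (\<forall>y. \<forall>q\<in>dist_simplex. \<forall>r\<in>dist_simplex. \<forall>t::real. 0 \<le> t \<and> t \<le> 1 \<longrightarrow>
          L (\<lambda>z. (1 - t) * q z + t * r z) y
            \<le> ereal (1 - t) * L q y + ereal t * L r y)"

definition loss_pt :: "(('y \<Rightarrow> real) \<Rightarrow> 'y \<Rightarrow> ereal) \<Rightarrow> ('x \<Rightarrow> 'y \<Rightarrow> real) \<Rightarrow> 'x \<Rightarrow> 'y \<Rightarrow> ereal" where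
  "loss_pt L h x y = L (h x) y"

definition exp_loss :: "(('y::finite \<Rightarrow> real) \<Rightarrow> 'y \<Rightarrow> ereal) \<Rightarrow> ('x::finite \<Rightarrow> 'y \<Rightarrow> real)
    \<Rightarrow> ('x \<times> 'y \<Rightarrow> real) \<Rightarrow> ereal" where
  "exp_loss L h p = (\<Sum>(x,y)\<in>UNIV. ereal (p (x,y)) * loss_pt L h x y)"

text \<open>l-entropy of a distribution and of an uncertainty set
  (min / max rendered as Inf / Sup).\<close>
definition entropy :: "(('y::finite \<Rightarrow> real) \<Rightarrow> 'y \<Rightarrow> ereal) \<Rightarrow> ('x::finite \<times> 'y \<Rightarrow> real) \<Rightarrow> ereal" where
  "entropy L p = (INF h\<in>rules. exp_loss L h p)"

definition entropy_set :: "(('y::finite \<Rightarrow> real) \<Rightarrow> 'y \<Rightarrow> ereal) \<Rightarrow> ('x::finite \<times> 'y \<Rightarrow> real) set \<Rightarrow> ereal" where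
  "entropy_set L U = (SUP p\<in>U. entropy L p)"

definition worst_loss :: "(('y::finite \<Rightarrow> real) \<Rightarrow> 'y \<Rightarrow> ereal) \<Rightarrow> ('x::finite \<times> 'y \<Rightarrow> real) set
    \<Rightarrow> ('x \<Rightarrow> 'y \<Rightarrow> real) \<Rightarrow> ereal" where
  "worst_loss L U h = (SUP p\<in>U. exp_loss L h p)"

definition is_MRC :: "(('y::finite \<Rightarrow> real) \<Rightarrow> 'y \<Rightarrow> ereal) \<Rightarrow> ('x::finite \<times> 'y \<Rightarrow> real) set
    \<Rightarrow> ('x \<Rightarrow> 'y \<Rightarrow> real) \<Rightarrow> bool" where
  "is_MRC L U h \<longleftrightarrow> h \<in> rules \<and> (\<forall>h'\<in>rules. worst_loss L U h \<le> worst_loss L U h')"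

definition feat_exp :: "('x::finite \<Rightarrow> 'y::finite \<Rightarrow> real^'m) \<Rightarrow> ('x \<times> 'y \<Rightarrow> real) \<Rightarrow> real^'m" where
  "feat_exp \<Phi> p = (\<Sum>(x,y)\<in>UNIV. p (x,y) *\<^sub>R \<Phi> x y)"

definition Uab :: "('x::finite \<Rightarrow> 'y::finite \<Rightarrow> real^'m) \<Rightarrow> real^'m \<Rightarrow> real^'m \<Rightarrow> ('x \<times> 'y \<Rightarrow> real) set" where
  "Uab \<Phi> a b = {p\<in>dist_simplex. \<forall>i. a $ i \<le> feat_exp \<Phi> p $ i \<and> feat_exp \<Phi> p $ i \<le> b $ i}"

text \<open>Optimal value of the linear program giving the lower bound (sup of the objective
  over the feasible set; it is the maximum when attained).\<close>
definition LP_lower :: "(('y::finite \<Rightarrow> real) \<Rightarrow> 'y \<Rightarrow> ereal) \<Rightarrow> ('x::finite \<Rightarrow> 'y \<Rightarrow> real^'m)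
    \<Rightarrow> real^'m \<Rightarrow> real^'m \<Rightarrow> ('x \<Rightarrow> 'y \<Rightarrow> real) \<Rightarrow> ereal" where
  "LP_lower L \<Phi> a b h =
     Sup {ereal ((1/2) * ((b + a) \<bullet> \<mu>) - (1/2) * ((b - a) \<bullet> \<eta>) + \<nu>) | \<mu> \<eta> \<nu>.
            (\<forall>x y. ereal (\<Phi> x y \<bullet> \<mu> + \<nu>) \<le> loss_pt L h x y) \<and>
            (\<forall>i. 0 \<le> \<eta> $ i + \<mu> $ i \<and> 0 \<le> \<eta> $ i - \<mu> $ i)}"

end

theory Submission
  imports Defs
begin

(* The upper bound R(h) <= H(U) is the minimax inequality
   min_h max_{p in U} l(h,p) <= max_{p in U} min_h l(h,p).  On the common support S of U
   the expected loss l(h,p) is dominated by the inner product of p with any vector w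
   majorising the losses of h on S, and these majorants form a convex set because L is
   convex.  A minimax theorem for bilinear functions over a compact convex set, proved by
   separating hyperplanes, therefore yields a distribution of U that is good against all
   majorants at once; mixing in a distribution of full support on S makes it also pay
   for infinite losses, at arbitrarily small cost since L is bounded below.
   The lower bound is weak duality of the linear program.  When pstar minimises l(h,.) over U,
   the same bilinear minimax theorem applied to the Lagrangian shows that there is no
   duality gap.  The equality for an entropy maximiser follows from H(U) <= H(pstar) <= l(h,pstar). *)

section \<open>Convex analysis\<close>

lemma separating_hyperplane_closed_cone_point:
  fixes K :: "'a::euclidean_space set"
  assumes "closed K" "convex K" "conic K" "K \<noteq> {}" "n \<notin> K"
  obtains d where "d \<bullet> n < 0" "\<And>x. x \<in> K \<Longrightarrow> 0 \<le> d \<bullet> x"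
proof -
  obtain d \<beta> where d: "d \<bullet> n < \<beta>" "\<And>x. x \<in> K \<Longrightarrow> \<beta> < d \<bullet> x"
    using separating_hyperplane_closed_point[OF assms(2,1,5)] by blast
  have "\<beta> < 0"
    using d(2)[of 0] conic_contains_0[OF assms(3)] assms(4) by simp
  have "0 \<le> d \<bullet> x" if "x \<in> K" for x
  proof (rule ccontr)
    assume neg: "\<not> 0 \<le> d \<bullet> x"
    have "(\<beta> / (d \<bullet> x)) *\<^sub>R x \<in> K"
      using \<open>\<beta> < 0\<close> neg by (intro conic_mul[OF assms(3) that]) (simp add: divide_nonpos_neg)
    with d(2) neg show False by fastforce
  qed
  moreover have "d \<bullet> n < 0" using d(1) \<open>\<beta> < 0\<close> by linarith
  ultimately show thesis using that by blast
qed

lemma mem_conic_hull_if_bounded_above: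
  fixes Q :: "'a::euclidean_space set"
  assumes "compact Q" "convex Q" "Q \<noteq> {}" "0 \<notin> Q"
    and w: "\<And>q. q \<in> Q \<Longrightarrow> q \<bullet> w < \<alpha>"
    and bounded: "\<And>v. (\<And>q. q \<in> Q \<Longrightarrow> q \<bullet> v < \<alpha>) \<Longrightarrow> n \<bullet> v \<le> c"
  shows "n \<in> conic hull Q"
proof (rule ccontr)
  assume "n \<notin> conic hull Q"
  moreover have "closed (conic hull Q)" using assms(1,4) by (intro closed_conic_hull_strong) simp
  ultimately obtain d where d: "d \<bullet> n < 0" "\<And>x. x \<in> conic hull Q \<Longrightarrow> 0 \<le> d \<bullet> x"
    using separating_hyperplane_closed_cone_point assms(2,3)
    by (metis conic_conic_hull convex_conic_hull conic_hull_eq_empty)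
  \<comment> \<open>moving from \<open>w\<close> in direction \<open>-d\<close> keeps the constraints but makes \<open>n \<bullet> v\<close> unbounded\<close>
  define k where "k = (\<bar>c\<bar> + \<bar>n \<bullet> w\<bar> + 1) / - (d \<bullet> n)"
  have "k \<ge> 0" using d(1) by (simp add: k_def divide_nonneg_neg)
  have "q \<bullet> (w - k *\<^sub>R d) < \<alpha>" if "q \<in> Q" for q
  proof -
    have "0 \<le> k * (d \<bullet> q)" using d(2)[OF hull_inc[OF that]] \<open>k \<ge> 0\<close> by simp
    then show ?thesis using w[OF that] by (simp add: inner_diff_right inner_commute)
  qed
  then have "n \<bullet> (w - k *\<^sub>R d) \<le> c" by (rule bounded)
  moreover have "k * - (d \<bullet> n) = \<bar>c\<bar> + \<bar>n \<bullet> w\<bar> + 1" using d(1) by (simp add: k_def)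
  ultimately show False by (simp add: inner_diff_right inner_commute)
qed

lemma bilinear_minimax:
  fixes P C :: "'a::euclidean_space set"
  assumes P: "compact P" "convex P" "P \<noteq> {}" and "convex C"
    and max_min: "\<And>w. w \<in> C \<Longrightarrow> \<exists>p\<in>P. \<alpha> \<le> p \<bullet> w"
  shows "\<exists>p\<in>P. \<forall>w\<in>C. \<alpha> \<le> p \<bullet> w"
proof (cases "C = {}")
  case True
  then show ?thesis using P(3) by blast
next
  case False
  \<comment> \<open>homogenise: \<open>p \<bullet> w + s = (p, 1) \<bullet> (w, s)\<close>\<close>
  define D where "D = {v :: 'a \<times> real. \<forall>p\<in>P. p \<bullet> fst v + snd v < \<alpha>}"
  have "D = (\<Inter>p\<in>P. {v. (p, 1) \<bullet> v < \<alpha>})" by (auto simp: D_def inner_prod_def)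
  then have "convex D" by (simp add: convex_INT convex_halfspace_lt)
  moreover have "(0, \<alpha> - 1) \<in> D" by (simp add: D_def)
  moreover have "convex (C \<times> {0})" by (simp add: \<open>convex C\<close> convex_Times)
  moreover have "D \<inter> C \<times> {0} = {}" using max_min by (fastforce simp: D_def)
  ultimately obtain n c where n: "n \<noteq> 0" "\<And>v. v \<in> D \<Longrightarrow> n \<bullet> v \<le> c"
      "\<And>w. w \<in> C \<Longrightarrow> c \<le> n \<bullet> (w, 0)"
    using separating_hyperplane_sets[of D "C \<times> {0}"] False by blast
  have "n \<in> conic hull (P \<times> {1::real})"
  proof (rule mem_conic_hull_if_bounded_above)
    show "compact (P \<times> {1::real})" "convex (P \<times> {1::real})"
      and "P \<times> {1::real} \<noteq> {}" "0 \<notin> P \<times> {1::real}"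
      using P by (auto simp: compact_Times convex_Times zero_prod_def)
    show "q \<bullet> (0, \<alpha> - 1) < \<alpha>" if "q \<in> P \<times> {1::real}" for q using that by (auto simp: inner_prod_def)
    show "n \<bullet> v \<le> c" if "\<And>q. q \<in> P \<times> {1::real} \<Longrightarrow> q \<bullet> v < \<alpha>" for v
      using that by (intro n(2)) (auto simp: D_def inner_prod_def)
  qed
  then obtain \<gamma> p where p: "p \<in> P" "0 \<le> \<gamma>" "n = \<gamma> *\<^sub>R (p, 1)"
    by (auto simp: conic_hull_explicit)
  have "0 < \<gamma>" using n(1) p by (cases "\<gamma> = 0") (auto simp: zero_prod_def)
  have "\<alpha> \<le> c / \<gamma>"
  proof (rule dense_le)
    fix s assume "s < \<alpha>"
    then have "n \<bullet> (0, s) \<le> c" by (intro n(2)) (simp add: D_def)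
    then show "s \<le> c / \<gamma>" using p(3) \<open>0 < \<gamma>\<close> by (simp add: le_divide_eq mult.commute)
  qed
  moreover have "c / \<gamma> \<le> p \<bullet> w" if "w \<in> C" for w
    using n(3)[OF that] p(3) \<open>0 < \<gamma>\<close> by (simp add: divide_le_eq mult.commute)
  ultimately show ?thesis using p(1) by force
qed

lemma inner_bounded_below_imp_zero:
  fixes d :: "'a::real_inner"
  assumes "\<And>x. b \<le> d \<bullet> x"
  shows "d = 0"
proof (rule ccontr)
  assume "d \<noteq> 0"
  have "b \<le> d \<bullet> (- ((\<bar>b\<bar> + 1) / (d \<bullet> d)) *\<^sub>R d)" by (rule assms)
  also have "\<dots> = - (\<bar>b\<bar> + 1)" using \<open>d \<noteq> 0\<close> by simp
  finally show False by linarith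
qed

lemma mem_convex_hull_finite_imageE:
  assumes "finite F" "g \<in> convex hull (f ` F)"
  obtains u where "\<forall>z\<in>F. 0 \<le> u z" "sum u F = 1" "g = (\<Sum>z\<in>F. u z *\<^sub>R f z)"
proof -
  have "f ` F = (\<Union>z\<in>F. {f z})" by blast
  with assms obtain u s where "\<forall>z\<in>F. 0 \<le> u z" "sum u F = 1" "\<forall>z\<in>F. s z = f z"
      "g = (\<Sum>z\<in>F. u z *\<^sub>R s z)"
    using convex_hull_finite_union[of F "\<lambda>z. {f z}"] by auto
  then show thesis by (intro that[of u]) (auto intro: sum.cong)
qed

lemma exists_lagrange_multiplier:
  fixes \<phi> :: "'z \<Rightarrow> 'a::euclidean_space" and c :: "'z \<Rightarrow> real"
  assumes "finite F" "F \<noteq> {}" "compact E" "convex E" "E \<noteq> {}"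
    and primal: "\<And>u. \<forall>z\<in>F. 0 \<le> u z \<Longrightarrow> sum u F = 1 \<Longrightarrow> (\<Sum>z\<in>F. u z *\<^sub>R \<phi> z) \<in> E
      \<Longrightarrow> t < (\<Sum>z\<in>F. u z * c z)"
  shows "\<exists>\<mu>. \<forall>z\<in>F. \<forall>e\<in>E. t < c z + (e - \<phi> z) \<bullet> \<mu>"
proof (rule ccontr)
  assume no_multiplier: "\<nexists>\<mu>. \<forall>z\<in>F. \<forall>e\<in>E. t < c z + (e - \<phi> z) \<bullet> \<mu>"
  \<comment> \<open>the Lagrangian \<open>\<Sum> u c + (e - \<Sum> u \<phi>) \<bullet> \<mu>\<close> is bilinear in \<open>(1, \<mu>)\<close> and a point of \<open>Q\<close>\<close>
  define Q where "Q = (\<Union>g\<in>convex hull ((\<lambda>z. (c z, - \<phi> z)) ` F). \<Union>y\<in>{0} \<times> E. {g + y})"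
  have vertex: "(c z, - \<phi> z) + (0, e) \<in> Q" if "z \<in> F" "e \<in> E" for z e
    unfolding Q_def using that by (blast intro: hull_inc)
  have "compact Q"
    unfolding Q_def using assms(1,3) by (intro compact_sums' finite_imp_compact_convex_hull compact_Times) auto
  moreover have "convex Q" unfolding Q_def using assms(4) by (intro convex_sums convex_Times) auto
  moreover have "Q \<noteq> {}" using assms(2,5) vertex by blast
  moreover have "\<exists>q\<in>Q. - t \<le> q \<bullet> w" if "w \<in> {- 1} \<times> UNIV" for w
  proof -
    from that obtain \<mu> where w: "w = (- 1, - \<mu>)" by (metis SigmaE minus_minus singletonD)
    have "\<not> (\<forall>z\<in>F. \<forall>e\<in>E. t < c z + (e - \<phi> z) \<bullet> \<mu>)" using no_multiplier by blast
    then obtain z e where "z \<in> F" "e \<in> E" "c z + (e - \<phi> z) \<bullet> \<mu> \<le> t" by (auto simp: not_less)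
    with vertex show ?thesis by (intro bexI[of _ "(c z, - \<phi> z) + (0, e)"]) (auto simp: w inner_prod_def algebra_simps)
  qed
  ultimately have "\<exists>q\<in>Q. \<forall>w\<in>{- 1} \<times> UNIV. - t \<le> q \<bullet> w"
    by (rule bilinear_minimax[OF _ _ _ convex_Times[OF convex_singleton convex_UNIV]])
  then obtain q where "q \<in> Q" and q: "\<And>\<mu>. - t \<le> q \<bullet> (- 1, \<mu>)" by blast
  then obtain g e where "g \<in> convex hull ((\<lambda>z. (c z, - \<phi> z)) ` F)" "e \<in> E" "q = g + (0, e)"
    unfolding Q_def by blast
  moreover from this(1) obtain u where u: "\<forall>z\<in>F. 0 \<le> u z" "sum u F = 1"
      and "g = (\<Sum>z\<in>F. u z *\<^sub>R (c z, - \<phi> z))"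
    using mem_convex_hull_finite_imageE[OF assms(1)] by blast
  ultimately have q_eq: "q = (\<Sum>z\<in>F. u z * c z, e - (\<Sum>z\<in>F. u z *\<^sub>R \<phi> z))"
    by (simp add: prod_eq_iff fst_sum snd_sum sum_negf)
  have "(\<Sum>z\<in>F. u z * c z) - t \<le> (e - (\<Sum>z\<in>F. u z *\<^sub>R \<phi> z)) \<bullet> \<mu>" for \<mu>
    using q[of \<mu>] by (simp add: q_eq inner_prod_def)
  then have "e - (\<Sum>z\<in>F. u z *\<^sub>R \<phi> z) = 0" by (rule inner_bounded_below_imp_zero)
  with \<open>e \<in> E\<close> have "t < (\<Sum>z\<in>F. u z * c z)" by (intro primal u) simp
  with q[of 0] show False by (simp add: q_eq inner_prod_def)
qed

lemma lp_no_duality_gap: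
  fixes \<phi> :: "'z \<Rightarrow> 'a::euclidean_space" and c :: "'z \<Rightarrow> real"
  assumes "finite F" "compact E" "convex E" "E \<noteq> {}"
    and primal: "\<And>u. \<forall>z\<in>F. 0 \<le> u z \<Longrightarrow> sum u F = 1 \<Longrightarrow> (\<Sum>z\<in>F. u z *\<^sub>R \<phi> z) \<in> E
      \<Longrightarrow> t < (\<Sum>z\<in>F. u z * c z)"
  obtains \<mu> \<nu> where "\<And>z. z \<in> F \<Longrightarrow> \<phi> z \<bullet> \<mu> + \<nu> \<le> c z" "\<And>e. e \<in> E \<Longrightarrow> t \<le> e \<bullet> \<mu> + \<nu>"
proof (cases "F = {}")
  case True
  then show thesis by (intro that[of 0 t]) auto
next
  case False
  then obtain \<mu> where \<mu>: "\<And>z e. z \<in> F \<Longrightarrow> e \<in> E \<Longrightarrow> t < c z + (e - \<phi> z) \<bullet> \<mu>"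
    using exists_lagrange_multiplier[OF assms(1) _ assms(2-4) primal] by blast
  define \<nu> where "\<nu> = Min ((\<lambda>z. c z - \<phi> z \<bullet> \<mu>) ` F)"
  have "\<nu> \<in> (\<lambda>z. c z - \<phi> z \<bullet> \<mu>) ` F"
    unfolding \<nu>_def using \<open>finite F\<close> False by (intro Min_in) auto
  then obtain z0 where "z0 \<in> F" and z0: "\<nu> = c z0 - \<phi> z0 \<bullet> \<mu>" by blast
  show thesis
  proof (rule that[of \<mu> \<nu>])
    show "\<phi> z \<bullet> \<mu> + \<nu> \<le> c z" if "z \<in> F" for z
    proof -
      have "\<nu> \<le> c z - \<phi> z \<bullet> \<mu>" unfolding \<nu>_def using \<open>finite F\<close> that by (intro Min_le) auto
      then show ?thesis by simp
    qed
    show "t \<le> e \<bullet> \<mu> + \<nu>" if "e \<in> E" for e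
      using \<mu>[OF \<open>z0 \<in> F\<close> that] by (simp add: z0 inner_diff_left)
  qed
qed

lemma convex_nonneg_common_support:
  fixes V :: "(real^'n) set"
  assumes "convex V" "V \<noteq> {}" "\<And>v i. v \<in> V \<Longrightarrow> 0 \<le> v $ i"
  obtains v where "v \<in> V" "\<And>i. \<exists>w\<in>V. 0 < w $ i \<Longrightarrow> 0 < v $ i"
proof (cases "\<exists>i. \<exists>w\<in>V. 0 < w $ i")
  case False
  then show thesis using assms(2) that by blast
next
  case True
  define S where "S = {i. \<exists>w\<in>V. 0 < w $ i}"
  obtain W where W: "\<forall>i\<in>S. W i \<in> V \<and> 0 < W i $ i"
    using bchoice[of S "\<lambda>i w. w \<in> V \<and> 0 < w $ i"] unfolding S_def by blast
  have "card S > 0" using True by (auto simp: S_def card_gt_0_iff)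
  define v where "v = (\<Sum>i\<in>S. (1 / card S) *\<^sub>R W i)"
  show thesis
  proof (rule that)
    show "v \<in> V"
      unfolding v_def using \<open>card S > 0\<close> W by (intro convex_sum[OF _ assms(1)]) auto
    show "0 < v $ i" if "\<exists>w\<in>V. 0 < w $ i" for i
    proof -
      have "i \<in> S" using that by (simp add: S_def)
      then show ?thesis
        unfolding v_def sum_component using \<open>card S > 0\<close> W assms(3)
        by (intro sum_pos2[of S i]) auto
    qed
  qed
qed

lemma lsc_bounded_below_on_compact:
  fixes f :: "'a::topological_space \<Rightarrow> ereal"
  assumes "compact K" "\<And>q. q \<in> K \<Longrightarrow> f q \<noteq> -\<infinity>"
    and lsc: "\<And>q c. q \<in> K \<Longrightarrow> c < f q \<Longrightarrow> eventually (\<lambda>r. c < f r) (at q within K)"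
  shows "\<exists>B::real. \<forall>q\<in>K. ereal B \<le> f q"
proof -
  have "\<exists>c N. open N \<and> q \<in> N \<and> (\<forall>r\<in>N \<inter> K. ereal c < f r)" if "q \<in> K" for q
  proof -
    define c where "c = (if f q = \<infinity> then 0 else real_of_ereal (f q) - 1)"
    have "ereal c < f q" using assms(2)[OF that] by (cases "f q") (auto simp: c_def)
    then have "eventually (\<lambda>r. ereal c < f r) (at q within K)" by (rule lsc[OF that])
    then obtain N where N: "open N" "q \<in> N" "\<forall>r\<in>N. r \<noteq> q \<longrightarrow> r \<in> K \<longrightarrow> ereal c < f r"
      unfolding eventually_at_topological by blast
    show ?thesis
      using N \<open>ereal c < f q\<close> by (intro exI[of _ c] exI[of _ N]) auto
  qed
  then obtain c N where cN: "\<And>q. q \<in> K \<Longrightarrow> open (N q) \<and> q \<in> N q \<and> (\<forall>r\<in>N q \<inter> K. ereal (c q) < f r)"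
    by metis
  moreover have "K \<subseteq> (\<Union>q\<in>K. N q)" using cN by blast
  ultimately obtain D where "D \<subseteq> K" "finite D" "K \<subseteq> (\<Union>q\<in>D. N q)"
    by (metis compactE_image[OF \<open>compact K\<close>])
  show ?thesis
  proof (intro exI ballI)
    fix r assume "r \<in> K"
    then obtain q where "q \<in> D" "r \<in> N q" using \<open>K \<subseteq> (\<Union>q\<in>D. N q)\<close> by blast
    then have "ereal (Min (insert 0 (c ` D))) \<le> ereal (c q)" using \<open>finite D\<close> by simp
    also have "\<dots> < f r" using cN \<open>q \<in> D\<close> \<open>D \<subseteq> K\<close> \<open>r \<in> N q\<close> \<open>r \<in> K\<close> by blast
    finally show "ereal (Min (insert 0 (c ` D))) \<le> f r" by simp
  qed
qed

lemma compact_prob_vectors: "compact {v::real^'n. (\<forall>i. 0 \<le> v $ i) \<and> (\<Sum>i\<in>UNIV. v $ i) = 1}"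
  (is "compact ?V")
proof -
  have "?V \<subseteq> cbox 0 1"
  proof
    fix v assume v: "v \<in> ?V"
    have "v $ i \<le> (\<Sum>i\<in>UNIV. v $ i)" for i by (rule member_le_sum) (use v in auto)
    then show "v \<in> cbox 0 1" using v by (simp add: mem_box_cart)
  qed
  moreover have "closed ?V"
    by (intro closed_Collect_conj closed_Collect_all closed_Collect_le closed_Collect_eq continuous_intros)
  ultimately show ?thesis by (meson bounded_cbox bounded_subset compact_eq_bounded_closed)
qed

lemma compact_dist_simplex: "compact (dist_simplex :: ('y::finite \<Rightarrow> real) set)"
proof -
  let ?V = "{v::real^'y. (\<forall>i. 0 \<le> v $ i) \<and> (\<Sum>i\<in>UNIV. v $ i) = 1}"
  have eq: "dist_simplex = vec_nth ` ?V"
  proof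
    show "vec_nth ` ?V \<subseteq> dist_simplex" by (auto simp: dist_simplex_def)
    show "dist_simplex \<subseteq> vec_nth ` ?V"
    proof
      fix p :: "'y \<Rightarrow> real" assume "p \<in> dist_simplex"
      then have "vec_lambda p \<in> ?V" by (simp add: dist_simplex_def)
      moreover have "p = vec_nth (vec_lambda p)" by (simp add: vec_lambda_inverse)
      ultimately show "p \<in> vec_nth ` ?V" by blast
    qed
  qed
  have "continuous_on ?V vec_nth"
    by (intro continuous_on_coordinatewise_then_product continuous_intros)
  then show ?thesis unfolding eq by (rule compact_continuous_image[OF _ compact_prob_vectors])
qed

lemma score_function_bounded_below:
  fixes L :: "('y::finite \<Rightarrow> real) \<Rightarrow> 'y \<Rightarrow> ereal"
  assumes "score_function L"
  obtains B :: real where "\<And>q y. q \<in> dist_simplex \<Longrightarrow> ereal B \<le> L q y"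
proof -
  have "\<forall>y. \<exists>B::real. \<forall>q\<in>dist_simplex. ereal B \<le> L q y"
  proof
    fix y
    have "\<And>q. q \<in> dist_simplex \<Longrightarrow> L q y \<noteq> -\<infinity>"
      and "\<And>q c. q \<in> dist_simplex \<Longrightarrow> c < L q y \<Longrightarrow> eventually (\<lambda>r. c < L r y) (at q within dist_simplex)"
      using assms unfolding score_function_def by auto
    then show "\<exists>B::real. \<forall>q\<in>dist_simplex. ereal B \<le> L q y"
      by (rule lsc_bounded_below_on_compact[OF compact_dist_simplex])
  qed
  then obtain B where B: "\<And>y q. q \<in> dist_simplex \<Longrightarrow> ereal (B y) \<le> L q y"
    using choice[of "\<lambda>y B. \<forall>q\<in>dist_simplex. ereal B \<le> L q y"] by blast
  show thesis
  proof (rule that[of "Min (range B)"])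
    fix q :: "'y \<Rightarrow> real" and y assume "q \<in> dist_simplex"
    have "ereal (Min (range B)) \<le> ereal (B y)" by simp
    also have "\<dots> \<le> L q y" using B[OF \<open>q \<in> dist_simplex\<close>] .
    finally show "ereal (Min (range B)) \<le> L q y" .
  qed
qed

section \<open>Losses and the uncertainty set\<close>

lemma loss_pt_not_MInfty:
  assumes "score_function L" "h \<in> rules"
  shows "loss_pt L h x y \<noteq> -\<infinity>"
  using assms unfolding score_function_def rules_def loss_pt_def by blast

lemma exp_loss_eq_sum: "exp_loss L h p = (\<Sum>z\<in>UNIV. ereal (p z) * loss_pt L h (fst z) (snd z))"
  unfolding exp_loss_def by (simp add: case_prod_unfold)

lemma exp_loss_eq_ereal:
  assumes "\<And>z. p z \<noteq> 0 \<Longrightarrow> loss_pt L h (fst z) (snd z) = ereal (w z)"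
  shows "exp_loss L h p = ereal (\<Sum>z\<in>UNIV. p z * w z)"
  unfolding exp_loss_eq_sum sum_ereal[symmetric]
proof (rule sum.cong)
  fix z
  show "ereal (p z) * loss_pt L h (fst z) (snd z) = ereal (p z * w z)"
    using assms[of z] by (cases "p z = 0") (auto simp: zero_ereal_def[symmetric])
qed simp

lemma exp_loss_le_ereal:
  assumes "\<And>z. 0 \<le> p z" "\<And>z. p z \<noteq> 0 \<Longrightarrow> loss_pt L h (fst z) (snd z) \<le> ereal (w z)"
  shows "exp_loss L h p \<le> ereal (\<Sum>z\<in>UNIV. p z * w z)"
  unfolding exp_loss_eq_sum sum_ereal[symmetric]
proof (rule sum_mono)
  fix z
  have "ereal (p z) * loss_pt L h (fst z) (snd z) \<le> ereal (p z) * ereal (w z)" if "p z \<noteq> 0"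
    using assms that by (intro ereal_mult_left_mono) auto
  then show "ereal (p z) * loss_pt L h (fst z) (snd z) \<le> ereal (p z * w z)"
    by (cases "p z = 0") (auto simp: zero_ereal_def[symmetric])
qed

lemma exp_loss_eq_PInfty:
  assumes "0 < p z" "loss_pt L h (fst z) (snd z) = \<infinity>"
  shows "exp_loss L h p = \<infinity>"
proof -
  have "ereal (p z) * loss_pt L h (fst z) (snd z) = \<infinity>" using assms by simp
  then show ?thesis unfolding exp_loss_eq_sum sum_Pinfty by (meson UNIV_I finite_class.finite_UNIV)
qed

lemma dist_simplex_convex_combination:
  assumes "p \<in> dist_simplex" "q \<in> dist_simplex" "0 \<le> t" "t \<le> 1"
  shows "(\<lambda>z. (1 - t) * p z + t * q z) \<in> dist_simplex"
  using assms by (auto simp: dist_simplex_def sum.distrib sum_distrib_left[symmetric])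

lemma rules_convex_combination:
  assumes "h \<in> rules" "h' \<in> rules" "0 \<le> t" "t \<le> 1"
  shows "(\<lambda>x y. (1 - t) * h x y + t * h' x y) \<in> rules"
  using assms by (auto simp: rules_def intro!: dist_simplex_convex_combination)

lemma feat_exp_eq_sum: "feat_exp \<Phi> p = (\<Sum>z\<in>UNIV. p z *\<^sub>R \<Phi> (fst z) (snd z))"
  unfolding feat_exp_def by (simp add: case_prod_unfold)

lemma Uab_iff: "p \<in> Uab \<Phi> a b \<longleftrightarrow> p \<in> dist_simplex \<and> feat_exp \<Phi> p \<in> cbox a b"
  by (simp add: Uab_def mem_box_cart)

lemma Uab_convex_combination:
  assumes "p \<in> Uab \<Phi> a b" "q \<in> Uab \<Phi> a b" "0 \<le> t" "t \<le> 1"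
  shows "(\<lambda>z. (1 - t) * p z + t * q z) \<in> Uab \<Phi> a b"
proof -
  have "feat_exp \<Phi> (\<lambda>z. (1 - t) * p z + t * q z) = (1 - t) *\<^sub>R feat_exp \<Phi> p + t *\<^sub>R feat_exp \<Phi> q"
    by (simp add: feat_exp_eq_sum scaleR_add_left sum.distrib scaleR_sum_right)
  also have "\<dots> \<in> cbox a b"
    using assms convexD[OF convex_box(1), of "feat_exp \<Phi> p" a b "feat_exp \<Phi> q" "1 - t" t]
    by (simp add: Uab_iff)
  finally show ?thesis
    using assms by (auto simp: Uab_iff intro: dist_simplex_convex_combination)
qed

lemma convex_vec_nth_vimage:
  fixes U :: "('n::finite \<Rightarrow> real) set"
  assumes "\<And>p q t. p \<in> U \<Longrightarrow> q \<in> U \<Longrightarrow> 0 \<le> t \<Longrightarrow> t \<le> 1 \<Longrightarrow> (\<lambda>z. (1 - t) * p z + t * q z) \<in> U"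
  shows "convex (vec_nth -` U)"
proof (rule convexI)
  fix v w :: "real^'n" and s t :: real
  assume "v \<in> vec_nth -` U" "w \<in> vec_nth -` U" "0 \<le> s" "0 \<le> t" "s + t = 1"
  then have "(\<lambda>z. (1 - t) * v $ z + t * w $ z) \<in> U" by (intro assms) auto
  moreover have "vec_nth (s *\<^sub>R v + t *\<^sub>R w) = (\<lambda>z. (1 - t) * v $ z + t * w $ z)"
    using \<open>s + t = 1\<close> by (auto simp: fun_eq_iff)
  ultimately show "s *\<^sub>R v + t *\<^sub>R w \<in> vec_nth -` U" by simp
qed

lemma compact_Uab: "compact (vec_nth -` Uab \<Phi> a b)"
proof -
  have "vec_nth -` Uab \<Phi> a b = {v. (\<forall>i. 0 \<le> v $ i) \<and> (\<Sum>i\<in>UNIV. v $ i) = 1}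
      \<inter> {v. \<forall>i. a $ i \<le> (\<Sum>z\<in>UNIV. v $ z *\<^sub>R \<Phi> (fst z) (snd z)) $ i
               \<and> (\<Sum>z\<in>UNIV. v $ z *\<^sub>R \<Phi> (fst z) (snd z)) $ i \<le> b $ i}"
    by (auto simp: Uab_def dist_simplex_def feat_exp_eq_sum)
  also have "compact \<dots>"
    by (intro compact_Int_closed compact_prob_vectors closed_Collect_all closed_Collect_conj
        closed_Collect_le continuous_intros)
  finally show ?thesis .
qed

lemma convex_Uab: "convex (vec_nth -` Uab \<Phi> a b)"
  by (intro convex_vec_nth_vimage Uab_convex_combination)

section \<open>The minimax inequality\<close>

definition loss_majorants :: "(('y::finite \<Rightarrow> real) \<Rightarrow> 'y \<Rightarrow> ereal) \<Rightarrow> ('x::finite \<times> 'y) set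
    \<Rightarrow> (real^('x \<times> 'y)) set" where
  "loss_majorants L S = {w. \<exists>h\<in>rules. \<forall>z\<in>S. loss_pt L h (fst z) (snd z) \<le> ereal (w $ z)}"

lemma convex_loss_majorants:
  assumes "score_function L"
  shows "convex (loss_majorants L S)"
proof (rule convexI)
  fix w w' s t
  assume "w \<in> loss_majorants L S" "w' \<in> loss_majorants L S" "0 \<le> s" "0 \<le> t" "s + t = (1::real)"
  then obtain h h' where h: "h \<in> rules" "\<And>z. z \<in> S \<Longrightarrow> loss_pt L h (fst z) (snd z) \<le> ereal (w $ z)"
    and h': "h' \<in> rules" "\<And>z. z \<in> S \<Longrightarrow> loss_pt L h' (fst z) (snd z) \<le> ereal (w' $ z)"
    and t: "0 \<le> t" "t \<le> 1" "s = 1 - t"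
    by (auto simp: loss_majorants_def)
  define g where "g x y = (1 - t) * h x y + t * h' x y" for x y
  have "g \<in> rules" unfolding g_def using h(1) h'(1) t(1,2) by (rule rules_convex_combination)
  moreover have "loss_pt L g (fst z) (snd z) \<le> ereal ((s *\<^sub>R w + t *\<^sub>R w') $ z)" if "z \<in> S" for z
  proof -
    have "h (fst z) \<in> dist_simplex" "h' (fst z) \<in> dist_simplex" using h(1) h'(1) by (auto simp: rules_def)
    then have "loss_pt L g (fst z) (snd z)
        \<le> ereal (1 - t) * loss_pt L h (fst z) (snd z) + ereal t * loss_pt L h' (fst z) (snd z)"
      using assms t unfolding score_function_def loss_pt_def g_def by blast
    also have "\<dots> \<le> ereal (1 - t) * ereal (w $ z) + ereal t * ereal (w' $ z)"
      using h(2) h'(2) that t by (intro add_mono ereal_mult_left_mono) auto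
    finally show ?thesis using t by simp
  qed
  ultimately show "s *\<^sub>R w + t *\<^sub>R w' \<in> loss_majorants L S" unfolding loss_majorants_def by blast
qed

lemma entropy_ge_if_majorants_bounded:
  fixes L :: "('y::finite \<Rightarrow> real) \<Rightarrow> 'y \<Rightarrow> ereal" and p :: "'x::finite \<times> 'y \<Rightarrow> real"
  assumes "score_function L" "\<And>z. z \<in> S \<Longrightarrow> 0 < p z" "\<And>z. z \<notin> S \<Longrightarrow> p z = 0"
    and bound: "\<And>w. w \<in> loss_majorants L S \<Longrightarrow> \<alpha> \<le> (\<Sum>z\<in>UNIV. p z * w $ z)"
  shows "ereal \<alpha> \<le> entropy L p"
  unfolding entropy_def
proof (rule INF_greatest)
  fix h :: "'x \<Rightarrow> 'y \<Rightarrow> real" assume "h \<in> rules"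
  show "ereal \<alpha> \<le> exp_loss L h p"
  proof (cases "\<exists>z\<in>S. loss_pt L h (fst z) (snd z) = \<infinity>")
    case True
    then show ?thesis using assms(2) exp_loss_eq_PInfty by fastforce
  next
    case False
    define w where "w = (\<chi> z. real_of_ereal (loss_pt L h (fst z) (snd z)))"
    have loss_eq: "loss_pt L h (fst z) (snd z) = ereal (w $ z)" if "z \<in> S" for z
      using False that loss_pt_not_MInfty[OF assms(1) \<open>h \<in> rules\<close>]
      by (cases "loss_pt L h (fst z) (snd z)") (auto simp: w_def)
    then have "w \<in> loss_majorants L S"
      unfolding loss_majorants_def using \<open>h \<in> rules\<close> by (intro CollectI bexI[of _ h] ballI) simp_all
    moreover have "exp_loss L h p = ereal (\<Sum>z\<in>UNIV. p z * w $ z)"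
      using assms(3) loss_eq by (intro exp_loss_eq_ereal) blast
    ultimately show ?thesis using bound by simp
  qed
qed

definition common_support :: "('z \<Rightarrow> real) set \<Rightarrow> 'z set" where
  "common_support U = {z. \<exists>p\<in>U. p z \<noteq> 0}"

lemma exists_full_support:
  fixes U :: "('z::finite \<Rightarrow> real) set"
  assumes "U \<subseteq> dist_simplex" "U \<noteq> {}" "convex (vec_nth -` U)"
  obtains p where "p \<in> U" "\<And>z. z \<in> common_support U \<Longrightarrow> 0 < p z"
proof -
  have nonneg: "0 \<le> v $ z" if "v \<in> vec_nth -` U" for v z
    using that assms(1) by (auto simp: dist_simplex_def)
  obtain p where "p \<in> U" using assms(2) by blast
  then have "vec_lambda p \<in> vec_nth -` U" by (simp add: vec_lambda_inverse)
  then have "vec_nth -` U \<noteq> {}" by blast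
  then obtain v where "v \<in> vec_nth -` U" and v: "\<And>z. \<exists>w\<in>vec_nth -` U. 0 < w $ z \<Longrightarrow> 0 < v $ z"
    using convex_nonneg_common_support[OF assms(3)] nonneg by blast
  show thesis
  proof (rule that)
    show "vec_nth v \<in> U" using \<open>v \<in> vec_nth -` U\<close> by simp
    show "0 < v $ z" if z: "z \<in> common_support U" for z
    proof (rule v)
      obtain q where "q \<in> U" "q z \<noteq> 0" using z by (auto simp: common_support_def)
      moreover have "0 \<le> q z" using \<open>q \<in> U\<close> assms(1) by (auto simp: dist_simplex_def)
      ultimately show "\<exists>w\<in>vec_nth -` U. 0 < w $ z"
        by (intro bexI[of _ "vec_lambda q"]) (auto simp: vec_lambda_inverse)
    qed
  qed
qed

lemma majorant_mean_ge:
  fixes L :: "('y::finite \<Rightarrow> real) \<Rightarrow> 'y \<Rightarrow> ereal" and p :: "'x::finite \<times> 'y \<Rightarrow> real"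
  assumes "p \<in> dist_simplex" "\<And>z. p z \<noteq> 0 \<Longrightarrow> z \<in> S" "w \<in> loss_majorants L S"
    and B: "\<And>h x y. h \<in> rules \<Longrightarrow> ereal B \<le> loss_pt L h (x::'x) y"
  shows "B \<le> (\<Sum>z\<in>UNIV. p z * w $ z)"
proof -
  obtain h where "h \<in> rules" and h: "\<And>z. z \<in> S \<Longrightarrow> loss_pt L h (fst z) (snd z) \<le> ereal (w $ z)"
    using assms(3) unfolding loss_majorants_def by blast
  have "B = (\<Sum>z\<in>UNIV. p z * B)"
    using assms(1) by (simp add: dist_simplex_def sum_distrib_right[symmetric])
  also have "\<dots> \<le> (\<Sum>z\<in>UNIV. p z * w $ z)"
  proof (rule sum_mono)
    fix z
    have "B \<le> w $ z" if "p z \<noteq> 0"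
      using B[OF \<open>h \<in> rules\<close>] h[OF assms(2)[OF that]] by (meson ereal_less_eq(3) order_trans)
    moreover have "0 \<le> p z" using assms(1) unfolding dist_simplex_def by blast
    ultimately show "p z * B \<le> p z * w $ z" by (cases "p z = 0") (auto intro: mult_left_mono)
  qed
  finally show ?thesis .
qed

lemma exists_dist_dominating_majorants:
  fixes L :: "('y::finite \<Rightarrow> real) \<Rightarrow> 'y \<Rightarrow> ereal" and U :: "('x::finite \<times> 'y \<Rightarrow> real) set"
  assumes L: "score_function L"
    and U: "U \<subseteq> dist_simplex" "U \<noteq> {}" "compact (vec_nth -` U)" "convex (vec_nth -` U)"
    and "\<alpha>\<^sub>1 < \<alpha>"
    and dominated: "\<And>w. w \<in> loss_majorants L (common_support U) \<Longrightarrow> \<exists>p\<in>U. \<alpha> \<le> (\<Sum>z\<in>UNIV. p z * w $ z)"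
  obtains q where "vec_nth q \<in> U" "\<And>z. z \<in> common_support U \<Longrightarrow> 0 < q $ z"
    "\<And>w. w \<in> loss_majorants L (common_support U) \<Longrightarrow> \<alpha>\<^sub>1 \<le> q \<bullet> w"
proof -
  define S where "S = common_support U"
  obtain pb where "pb \<in> U" and pb_pos: "\<And>z. z \<in> S \<Longrightarrow> 0 < pb z"
    using exists_full_support[OF U(1,2,4)] by (auto simp: S_def)
  obtain B0 where B0: "\<And>q y. q \<in> dist_simplex \<Longrightarrow> ereal B0 \<le> L q y"
    using score_function_bounded_below[OF L] by blast
  define B where "B = min B0 \<alpha>\<^sub>1"
  have loss_ge_B: "ereal B \<le> loss_pt L h x y" if "h \<in> rules" for h x y
    using B0[of "h x" y] that by (auto simp: B_def rules_def loss_pt_def intro: min.coboundedI1)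
  \<comment> \<open>mixing in \<open>pb\<close> with weight \<open>\<epsilon>\<close> charges all of \<open>S\<close> and costs at most \<open>\<alpha> - \<alpha>\<^sub>1\<close>\<close>
  define \<epsilon> where "\<epsilon> = (\<alpha> - \<alpha>\<^sub>1) / (\<alpha> - B)"
  have "B \<le> \<alpha>\<^sub>1" "0 < \<alpha> - B" using \<open>\<alpha>\<^sub>1 < \<alpha>\<close> by (auto simp: B_def)
  then have \<epsilon>: "0 < \<epsilon>" "\<epsilon> \<le> 1" and \<epsilon>_eq: "\<epsilon> * (\<alpha> - B) = \<alpha> - \<alpha>\<^sub>1"
    using \<open>\<alpha>\<^sub>1 < \<alpha>\<close> by (simp_all add: \<epsilon>_def)
  define P where "P = (\<lambda>v. \<epsilon> *\<^sub>R vec_lambda pb + (1 - \<epsilon>) *\<^sub>R v) ` vec_nth -` U"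
  have "vec_lambda pb \<in> vec_nth -` U" using \<open>pb \<in> U\<close> by (simp add: vec_lambda_inverse)
  then have "compact P" "convex P" "P \<noteq> {}"
    using U(3,4) by (auto simp: P_def compact_affinity convex_affinity)
  moreover have "\<exists>q\<in>P. \<alpha>\<^sub>1 \<le> q \<bullet> w" if w: "w \<in> loss_majorants L S" for w
  proof -
    obtain p where "p \<in> U" "\<alpha> \<le> (\<Sum>z\<in>UNIV. p z * w $ z)" using dominated w by (auto simp: S_def)
    moreover have "B \<le> (\<Sum>z\<in>UNIV. pb z * w $ z)"
      using \<open>pb \<in> U\<close> U(1) w loss_ge_B
      by (intro majorant_mean_ge) (auto simp: S_def common_support_def)
    ultimately have "(1 - \<epsilon>) * \<alpha> + \<epsilon> * B \<le> (1 - \<epsilon>) * (vec_lambda p \<bullet> w) + \<epsilon> * (vec_lambda pb \<bullet> w)"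
      using \<epsilon> by (intro add_mono mult_left_mono) (auto simp: inner_vec_def)
    also have "(1 - \<epsilon>) * \<alpha> + \<epsilon> * B = \<alpha>\<^sub>1" using \<epsilon>_eq by (simp add: algebra_simps)
    finally show ?thesis
      using \<open>p \<in> U\<close> by (intro bexI[of _ "\<epsilon> *\<^sub>R vec_lambda pb + (1 - \<epsilon>) *\<^sub>R vec_lambda p"])
        (auto simp: P_def vec_lambda_inverse inner_add_left)
  qed
  ultimately have "\<exists>q\<in>P. \<forall>w\<in>loss_majorants L S. \<alpha>\<^sub>1 \<le> q \<bullet> w"
    by (rule bilinear_minimax[OF _ _ _ convex_loss_majorants[OF L]])
  then obtain v q where "vec_nth v \<in> U" and q: "q = \<epsilon> *\<^sub>R vec_lambda pb + (1 - \<epsilon>) *\<^sub>R v"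
    and q_bound: "\<And>w. w \<in> loss_majorants L S \<Longrightarrow> \<alpha>\<^sub>1 \<le> q \<bullet> w"
    by (auto simp: P_def)
  show thesis
  proof (rule that)
    show "vec_nth q \<in> U"
      using convexD[OF U(4), of "vec_lambda pb" v \<epsilon> "1 - \<epsilon>"] \<open>pb \<in> U\<close> \<open>vec_nth v \<in> U\<close> \<epsilon> q
      by (simp add: vec_lambda_inverse)
    show "0 < q $ z" if "z \<in> common_support U" for z
    proof -
      have "0 \<le> v $ z" using \<open>vec_nth v \<in> U\<close> U(1) unfolding dist_simplex_def by blast
      then show ?thesis using \<epsilon> pb_pos that by (simp add: q S_def add_pos_nonneg)
    qed
  qed (simp add: q_bound S_def)
qed

lemma INF_worst_loss_le_entropy_set:
  fixes L :: "('y::finite \<Rightarrow> real) \<Rightarrow> 'y \<Rightarrow> ereal" and U :: "('x::finite \<times> 'y \<Rightarrow> real) set"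
  assumes L: "score_function L"
    and U: "U \<subseteq> dist_simplex" "U \<noteq> {}" "compact (vec_nth -` U)" "convex (vec_nth -` U)"
  shows "(INF h\<in>rules. worst_loss L U h) \<le> entropy_set L U"
proof (rule dense_le)
  fix \<beta> assume \<beta>: "\<beta> < (INF h\<in>rules. worst_loss L U h)"
  show "\<beta> \<le> entropy_set L U"
  proof (cases \<beta>)
    case (real \<alpha>\<^sub>1)
    obtain \<alpha> where "\<alpha>\<^sub>1 < \<alpha>" and \<alpha>: "ereal \<alpha> < (INF h\<in>rules. worst_loss L U h)"
      using ereal_dense2[OF \<beta>[unfolded real]] by auto
    have "\<exists>p\<in>U. \<alpha> \<le> (\<Sum>z\<in>UNIV. p z * w $ z)" if w: "w \<in> loss_majorants L (common_support U)" for w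
    proof -
      obtain h where "h \<in> rules"
        and h: "\<And>z. z \<in> common_support U \<Longrightarrow> loss_pt L h (fst z) (snd z) \<le> ereal (w $ z)"
        using w unfolding loss_majorants_def by blast
      have "ereal \<alpha> < worst_loss L U h"
        using \<alpha> INF_lower[OF \<open>h \<in> rules\<close>, of "worst_loss L U"] by order
      then obtain p where "p \<in> U" "ereal \<alpha> < exp_loss L h p"
        unfolding worst_loss_def less_SUP_iff by blast
      moreover have "exp_loss L h p \<le> ereal (\<Sum>z\<in>UNIV. p z * w $ z)"
      proof (rule exp_loss_le_ereal)
        show "0 \<le> p z" for z using \<open>p \<in> U\<close> U(1) unfolding dist_simplex_def by blast
        show "loss_pt L h (fst z) (snd z) \<le> ereal (w $ z)" if "p z \<noteq> 0" for z
          using \<open>p \<in> U\<close> that by (intro h) (auto simp: common_support_def)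
      qed
      ultimately have "ereal \<alpha> < ereal (\<Sum>z\<in>UNIV. p z * w $ z)" by order
      with \<open>p \<in> U\<close> show ?thesis by (auto intro: less_imp_le)
    qed
    then obtain q where "vec_nth q \<in> U" and q_pos: "\<And>z. z \<in> common_support U \<Longrightarrow> 0 < q $ z"
      and q_bound: "\<And>w. w \<in> loss_majorants L (common_support U) \<Longrightarrow> \<alpha>\<^sub>1 \<le> q \<bullet> w"
      using exists_dist_dominating_majorants[OF L U \<open>\<alpha>\<^sub>1 < \<alpha>\<close>] by blast
    have "ereal \<alpha>\<^sub>1 \<le> entropy L (vec_nth q)"
    proof (rule entropy_ge_if_majorants_bounded[OF L q_pos])
      show "q $ z = 0" if "z \<notin> common_support U" for z
        using \<open>vec_nth q \<in> U\<close> that by (auto simp: common_support_def)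
      show "\<alpha>\<^sub>1 \<le> (\<Sum>z\<in>UNIV. q $ z * w $ z)" if "w \<in> loss_majorants L (common_support U)" for w
        using q_bound[OF that] by (simp add: inner_vec_def)
    qed
    also have "\<dots> \<le> entropy_set L U" unfolding entropy_set_def by (rule SUP_upper[OF \<open>vec_nth q \<in> U\<close>])
    finally show ?thesis by (simp add: real)
  qed (use \<beta> in auto)
qed

section \<open>Bounds from linear programming duality\<close>

lemma box_objective_le_inner:
  fixes a b e \<mu> \<eta> :: "real^'m"
  assumes "e \<in> cbox a b" "\<forall>i. 0 \<le> \<eta> $ i + \<mu> $ i \<and> 0 \<le> \<eta> $ i - \<mu> $ i"
  shows "(1/2) * ((b + a) \<bullet> \<mu>) - (1/2) * ((b - a) \<bullet> \<eta>) \<le> e \<bullet> \<mu>"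
proof -
  have "(1/2) * ((b + a) \<bullet> \<mu>) - (1/2) * ((b - a) \<bullet> \<eta>)
      = (\<Sum>i\<in>UNIV. (1/2) * ((b $ i + a $ i) * \<mu> $ i) - (1/2) * ((b $ i - a $ i) * \<eta> $ i))"
    by (simp add: inner_vec_def sum_distrib_left sum_subtractf)
  also have "\<dots> \<le> (\<Sum>i\<in>UNIV. e $ i * \<mu> $ i)"
  proof (rule sum_mono)
    fix i
    have "a $ i \<le> e $ i" "e $ i \<le> b $ i" "0 \<le> \<eta> $ i + \<mu> $ i" "0 \<le> \<eta> $ i - \<mu> $ i"
      using assms by (auto simp: mem_box_cart)
    then have "(b $ i - e $ i) * \<mu> $ i \<le> (b $ i - e $ i) * \<eta> $ i"
      and "(e $ i - a $ i) * (- \<mu> $ i) \<le> (e $ i - a $ i) * \<eta> $ i"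
      by (intro mult_left_mono; simp)+
    then show "(1/2) * ((b $ i + a $ i) * \<mu> $ i) - (1/2) * ((b $ i - a $ i) * \<eta> $ i) \<le> e $ i * \<mu> $ i"
      by (simp add: algebra_simps)
  qed
  also have "\<dots> = e \<bullet> \<mu>" by (simp add: inner_vec_def)
  finally show ?thesis .
qed

lemma box_objective_attained:
  fixes a b \<mu> :: "real^'m"
  assumes "\<forall>i. a $ i \<le> b $ i"
  obtains e where "e \<in> cbox a b"
    "(1/2) * ((b + a) \<bullet> \<mu>) - (1/2) * ((b - a) \<bullet> (\<chi> i. \<bar>\<mu> $ i\<bar>)) = e \<bullet> \<mu>"
proof
  \<comment> \<open>the minimising vertex of the box\<close>
  let ?e = "(\<chi> i. if 0 \<le> \<mu> $ i then a $ i else b $ i) :: real^'m"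
  show "?e \<in> cbox a b" using assms by (simp add: mem_box_cart)
  have "(1/2) * ((b + a) \<bullet> \<mu>) - (1/2) * ((b - a) \<bullet> (\<chi> i. \<bar>\<mu> $ i\<bar>))
      = (\<Sum>i\<in>UNIV. (1/2) * ((b $ i + a $ i) * \<mu> $ i) - (1/2) * ((b $ i - a $ i) * \<bar>\<mu> $ i\<bar>))"
    by (simp add: inner_vec_def sum_distrib_left sum_subtractf)
  also have "\<dots> = (\<Sum>i\<in>UNIV. ?e $ i * \<mu> $ i)"
    by (rule sum.cong) (auto simp: algebra_simps abs_if)
  finally show "(1/2) * ((b + a) \<bullet> \<mu>) - (1/2) * ((b - a) \<bullet> (\<chi> i. \<bar>\<mu> $ i\<bar>)) = ?e \<bullet> \<mu>"
    by (simp add: inner_vec_def)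
qed

lemma LP_lower_le_exp_loss:
  assumes "p \<in> Uab \<Phi> a b"
  shows "LP_lower L \<Phi> a b h \<le> exp_loss L h p"
  unfolding LP_lower_def
proof (rule Sup_least, clarify)
  fix \<mu> \<eta> \<nu>
  assume feasible: "\<forall>x y. ereal (\<Phi> x y \<bullet> \<mu> + \<nu>) \<le> loss_pt L h x y"
    and \<eta>: "\<forall>i. 0 \<le> \<eta> $ i + \<mu> $ i \<and> 0 \<le> \<eta> $ i - \<mu> $ i"
  have p: "p \<in> dist_simplex" "feat_exp \<Phi> p \<in> cbox a b" using assms by (auto simp: Uab_iff)
  have "(1/2) * ((b + a) \<bullet> \<mu>) - (1/2) * ((b - a) \<bullet> \<eta>) + \<nu> \<le> feat_exp \<Phi> p \<bullet> \<mu> + \<nu>"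
    using box_objective_le_inner[OF p(2) \<eta>] by simp
  also have "\<dots> = (\<Sum>z\<in>UNIV. p z * (\<Phi> (fst z) (snd z) \<bullet> \<mu> + \<nu>))"
    using p(1) by (simp add: dist_simplex_def feat_exp_eq_sum inner_sum_left distrib_left sum.distrib
        sum_distrib_right[symmetric])
  finally have "ereal ((1/2) * ((b + a) \<bullet> \<mu>) - (1/2) * ((b - a) \<bullet> \<eta>) + \<nu>)
      \<le> (\<Sum>z\<in>UNIV. ereal (p z) * ereal (\<Phi> (fst z) (snd z) \<bullet> \<mu> + \<nu>))" by simp
  also have "\<dots> \<le> exp_loss L h p"
    unfolding exp_loss_eq_sum using feasible p(1)
    by (intro sum_mono ereal_mult_left_mono) (auto simp: dist_simplex_def)
  finally show "ereal ((1/2) * ((b + a) \<bullet> \<mu>) - (1/2) * ((b - a) \<bullet> \<eta>) + \<nu>) \<le> exp_loss L h p" .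
qed

lemma LP_lower_ge_dual_value:
  fixes \<mu> a b :: "real^'m"
  assumes feasible: "\<forall>x y. ereal (\<Phi> x y \<bullet> \<mu> + \<nu>) \<le> loss_pt L h x y" and "\<forall>i. a $ i \<le> b $ i"
    and dual_value: "\<And>e. e \<in> cbox a b \<Longrightarrow> t \<le> e \<bullet> \<mu> + \<nu>"
  shows "ereal t \<le> LP_lower L \<Phi> a b h"
proof -
  define \<eta> :: "real^'m" where "\<eta> = (\<chi> i. \<bar>\<mu> $ i\<bar>)"
  obtain e where "e \<in> cbox a b" and e: "(1/2) * ((b + a) \<bullet> \<mu>) - (1/2) * ((b - a) \<bullet> \<eta>) = e \<bullet> \<mu>"
    using box_objective_attained[OF assms(2)] unfolding \<eta>_def by blast
  have "t \<le> (1/2) * ((b + a) \<bullet> \<mu>) - (1/2) * ((b - a) \<bullet> \<eta>) + \<nu>"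
    using dual_value[OF \<open>e \<in> cbox a b\<close>] e by simp
  also have "ereal \<dots> \<le> LP_lower L \<Phi> a b h"
    unfolding LP_lower_def using feasible
    by (intro Sup_upper CollectI exI[of _ \<mu>] exI[of _ \<eta>] exI[of _ \<nu>]) (auto simp: \<eta>_def)
  finally show ?thesis by simp
qed

lemma sum_extend_by_zero:
  fixes g :: "'z::finite \<Rightarrow> 'a::real_vector"
  shows "(\<Sum>z\<in>UNIV. (if z \<in> F then u z else 0) *\<^sub>R g z) = (\<Sum>z\<in>F. u z *\<^sub>R g z)"
  by (simp add: if_distrib[of "\<lambda>r. r *\<^sub>R _"] sum.inter_restrict[symmetric] cong: if_cong)

lemma extend_by_zero_mem_Uab:
  assumes "\<forall>z\<in>F. 0 \<le> u z" "sum u F = 1" "(\<Sum>z\<in>F. u z *\<^sub>R \<Phi> (fst z) (snd z)) \<in> cbox a b"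
  shows "(\<lambda>z. if z \<in> F then u z else 0) \<in> Uab \<Phi> a b"
proof -
  have "(\<Sum>z\<in>UNIV. if z \<in> F then u z else 0) = 1"
    using sum_extend_by_zero[of F u "\<lambda>_. 1 :: real"] assms(2) by simp
  moreover have "feat_exp \<Phi> (\<lambda>z. if z \<in> F then u z else 0) \<in> cbox a b"
    using sum_extend_by_zero[of F u "\<lambda>z. \<Phi> (fst z) (snd z)"] assms(3) by (simp add: feat_exp_eq_sum)
  ultimately show ?thesis using assms(1) by (auto simp: Uab_iff dist_simplex_def)
qed

lemma exp_loss_le_LP_lower:
  fixes L :: "('y::finite \<Rightarrow> real) \<Rightarrow> 'y \<Rightarrow> ereal" and \<Phi> :: "'x::finite \<Rightarrow> 'y \<Rightarrow> real^'m"
  assumes L: "score_function L" and "h \<in> rules" and "pstar \<in> Uab \<Phi> a b"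
    and minimal: "\<And>p. p \<in> Uab \<Phi> a b \<Longrightarrow> exp_loss L h pstar \<le> exp_loss L h p"
  shows "exp_loss L h pstar \<le> LP_lower L \<Phi> a b h"
proof (rule dense_le)
  fix \<beta> assume \<beta>: "\<beta> < exp_loss L h pstar"
  show "\<beta> \<le> LP_lower L \<Phi> a b h"
  proof (cases \<beta>)
    case (real t)
    define F where "F = {z. loss_pt L h (fst z) (snd z) \<noteq> \<infinity>}"
    define c where "c z = real_of_ereal (loss_pt L h (fst z) (snd z))" for z
    have loss_F: "loss_pt L h (fst z) (snd z) = ereal (c z)" if "z \<in> F" for z
      using that loss_pt_not_MInfty[OF L \<open>h \<in> rules\<close>]
      by (cases "loss_pt L h (fst z) (snd z)") (auto simp: F_def c_def)
    have ab: "\<forall>i. a $ i \<le> b $ i" using \<open>pstar \<in> Uab \<Phi> a b\<close> by (auto simp: Uab_def intro: order_trans)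
    obtain \<mu> \<nu> where dual_feasible: "\<And>z. z \<in> F \<Longrightarrow> \<Phi> (fst z) (snd z) \<bullet> \<mu> + \<nu> \<le> c z"
      and dual_value: "\<And>e. e \<in> cbox a b \<Longrightarrow> t \<le> e \<bullet> \<mu> + \<nu>"
    proof (rule lp_no_duality_gap[of F "cbox a b" "\<lambda>z. \<Phi> (fst z) (snd z)" t c])
      show "finite F" "compact (cbox a b)" "convex (cbox a b)" by simp_all
      have "a \<in> cbox a b" using ab by (simp add: mem_box_cart)
      then show "cbox a b \<noteq> {}" by blast
      fix u assume u: "\<forall>z\<in>F. 0 \<le> u z" "sum u F = 1" "(\<Sum>z\<in>F. u z *\<^sub>R \<Phi> (fst z) (snd z)) \<in> cbox a b"
      define p where "p z = (if z \<in> F then u z else 0)" for z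
      have "p \<in> Uab \<Phi> a b" unfolding p_def using u by (rule extend_by_zero_mem_Uab)
      then have "ereal t < exp_loss L h p" using \<beta> minimal[of p] by (simp add: real)
      also have "exp_loss L h p = ereal (\<Sum>z\<in>UNIV. p z * c z)"
        by (rule exp_loss_eq_ereal) (auto simp: p_def loss_F split: if_splits)
      finally show "t < (\<Sum>z\<in>F. u z * c z)" using sum_extend_by_zero[of F u c] by (simp add: p_def)
    qed (rule that)
    have "ereal (\<Phi> x y \<bullet> \<mu> + \<nu>) \<le> loss_pt L h x y" for x y
      using dual_feasible[of "(x, y)"] loss_F[of "(x, y)"] by (cases "(x, y) \<in> F") (auto simp: F_def)
    then have "ereal t \<le> LP_lower L \<Phi> a b h"
      using ab dual_value by (intro LP_lower_ge_dual_value) auto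
    then show ?thesis by (simp add: real)
  qed (use \<beta> in auto)
qed

theorem theorem3:
  fixes L :: "('y::finite \<Rightarrow> real) \<Rightarrow> 'y \<Rightarrow> ereal"
    and \<Phi> :: "'x::finite \<Rightarrow> 'y \<Rightarrow> real^'m"
    and a b :: "real^'m"
    and h :: "'x \<Rightarrow> 'y \<Rightarrow> real"
    and pstar :: "'x \<times> 'y \<Rightarrow> real"
  assumes "score_function L"
    and "Uab \<Phi> a b \<noteq> {}"
    and "is_MRC L (Uab \<Phi> a b) h"
    and "pstar \<in> Uab \<Phi> a b"
  shows "LP_lower L \<Phi> a b h \<le> exp_loss L h pstar
       \<and> exp_loss L h pstar \<le> entropy_set L (Uab \<Phi> a b)
       \<and> ((\<forall>p\<in>Uab \<Phi> a b. entropy L p \<le> entropy L pstar)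
            \<longrightarrow> exp_loss L h pstar = entropy_set L (Uab \<Phi> a b))
       \<and> ((\<forall>p\<in>Uab \<Phi> a b. exp_loss L h pstar \<le> exp_loss L h p)
            \<longrightarrow> exp_loss L h pstar = LP_lower L \<Phi> a b h)"
proof -
  have "h \<in> rules" using assms(3) by (simp add: is_MRC_def)
  have lower: "LP_lower L \<Phi> a b h \<le> exp_loss L h pstar" by (rule LP_lower_le_exp_loss[OF assms(4)])
  have "exp_loss L h pstar \<le> worst_loss L (Uab \<Phi> a b) h"
    unfolding worst_loss_def by (rule SUP_upper[OF assms(4)])
  also have "\<dots> \<le> (INF h'\<in>rules. worst_loss L (Uab \<Phi> a b) h')"
    using assms(3) by (auto simp: is_MRC_def intro: INF_greatest)
  also have "\<dots> \<le> entropy_set L (Uab \<Phi> a b)"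
    using assms(1,2) compact_Uab convex_Uab by (intro INF_worst_loss_le_entropy_set) (auto simp: Uab_def)
  finally have upper: "exp_loss L h pstar \<le> entropy_set L (Uab \<Phi> a b)" .
  have "entropy_set L (Uab \<Phi> a b) \<le> exp_loss L h pstar"
    if "\<forall>p\<in>Uab \<Phi> a b. entropy L p \<le> entropy L pstar"
  proof -
    have "entropy_set L (Uab \<Phi> a b) \<le> entropy L pstar"
      unfolding entropy_set_def using that by (intro SUP_least) blast
    also have "\<dots> \<le> exp_loss L h pstar" unfolding entropy_def by (rule INF_lower[OF \<open>h \<in> rules\<close>])
    finally show ?thesis .
  qed
  moreover have "exp_loss L h pstar \<le> LP_lower L \<Phi> a b h"
    if "\<forall>p\<in>Uab \<Phi> a b. exp_loss L h pstar \<le> exp_loss L h p"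
    using assms(1,4) \<open>h \<in> rules\<close> that by (intro exp_loss_le_LP_lower) auto
  ultimately show ?thesis using lower upper by (auto intro: antisym)
qed

end
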